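(* Let $q>1$, $A>0$, $\alpha=q/(q-1)$, and $c(A,q)=\tfrac12\big(A(4q-2)/q\big)^q$. Let $V\ge0$ be a maximizer of $y_V(1)$ over non-negative $V\in L^q[0,1]$ with $\|V\|_{L^q}\le A$. Let $H$ and $\Psi$ be associated with $V$, that is: - $\Psi>0$ on $(0,1)$; - $\Psi''-|\Psi|^\alpha+2H=0$; - $\Psi(0)=\Psi(1)=0$; - $\Psi'(0)=H-c(A,q)$; - $V=\frac{q}{4q-2}\Psi^{1/(q-1)}$. Then $H\in(c(A,q),h(A,q))$, where $h(A,q)$ is as defined below.
   Context: For $V\in L^q[0,1]$, $y_V$ denotes the solution of $-y''+Vy=0$ on $[0,1]$ with $y(0)=0$, $y'(0)=1$. The number $h(A,q)$ is the unique $H>c(A,q)$ such that $(2H)^{1/\alpha}$ is a root of $f_H(x)=\frac{2}{\alpha+1}x|x|^\alpha-4Hx+(H-c(A,q))^2$. *)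

theory Defs
  imports "HOL-Analysis.Analysis"
begin

definition alpha_exp :: "real \<Rightarrow> real" where
  "alpha_exp q = q / (q - 1)"

definition cAq :: "real \<Rightarrow> real \<Rightarrow> real" where
  "cAq A q = (1/2) * (A * (4*q - 2) / q) powr q"

text \<open>Admissible potentials: non-negative on [0,1], measurable, with L^q norm at most A
  (encoded as the non-negative integral of |V|^q being at most A^q, which also gives V in L^q).\<close>
definition admissible :: "real \<Rightarrow> real \<Rightarrow> (real \<Rightarrow> real) \<Rightarrow> bool" where
  "admissible A q V \<longleftrightarrow>
     set_borel_measurable lborel {0..1} V \<and>
     (\<forall>x\<in>{0..1}. V x \<ge> 0) \<and>
     (\<integral>\<^sup>+ x\<in>{0..1}. ennreal (\<bar>V x\<bar> powr q) \<partial>lborel) \<le> ennreal (A powr q)"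

text \<open>Solution of -y'' + V y = 0, y(0)=0, y'(0)=1 on [0,1] in the integrated (W^{2,q}) sense:
  y continuous and y(t) = \<integral>_0^t (1 + \<integral>_0^s V y).\<close>
definition is_sol :: "(real \<Rightarrow> real) \<Rightarrow> (real \<Rightarrow> real) \<Rightarrow> bool" where
  "is_sol V y \<longleftrightarrow> continuous_on {0..1} y \<and>
     (\<forall>t\<in>{0..1}. y t = (LINT s:{0..t}|lborel. 1 + (LINT r:{0..s}|lborel. V r * y r)))"

definition yV1 :: "(real \<Rightarrow> real) \<Rightarrow> real" where
  "yV1 V = (THE c. \<exists>y. is_sol V y \<and> y 1 = c)"

definition fH :: "real \<Rightarrow> real \<Rightarrow> real \<Rightarrow> real \<Rightarrow> real" where
  "fH A q H x = 2 / (alpha_exp q + 1) * x * \<bar>x\<bar> powr (alpha_exp q) - 4 * H * x + (H - cAq A q)^2"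

definition hAq :: "real \<Rightarrow> real \<Rightarrow> real" where
  "hAq A q = (THE H. H > cAq A q \<and> fH A q H ((2*H) powr (1 / alpha_exp q)) = 0)"

end

theory Submission
  imports Defs
begin

text \<open>
  Write \<open>c = c(A,q)\<close> and \<open>f\<^sub>H(x) = 2/(\<alpha>+1) x\<^sup>\<alpha>\<^sup>+\<^sup>1 - 4Hx + (H - c)\<^sup>2\<close> for \<open>x \<ge> 0\<close>.
  Since \<open>f\<^sub>H'(x) = 2(x\<^sup>\<alpha> - 2H)\<close>, the equation conserves the energy \<open>\<Psi>'\<^sup>2 - f\<^sub>H(\<Psi>)\<close>,
  and the initial data \<open>\<Psi>(0) = 0\<close>, \<open>\<Psi>'(0) = H - c\<close> make it vanish. Positivity of \<open>\<Psi>\<close>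
  near \<open>0\<close> gives \<open>H \<ge> c\<close>, and \<open>H = c\<close> is impossible because then \<open>f\<^sub>H < 0\<close> just
  to the right of \<open>0\<close>. At an interior critical point of \<open>\<Psi>\<close> the energy identity gives
  \<open>f\<^sub>H(\<Psi>) = 0\<close>, so the minimum of \<open>f\<^sub>H\<close>, attained at \<open>X = (2H)\<^sup>1\<^sup>/\<^sup>\<alpha>\<close>, is
  \<open>\<le> 0\<close>. It cannot be \<open>0\<close>: then \<open>\<Psi>\<close> would reach the equilibrium \<open>X\<close>, and since
  \<open>f\<^sub>H - f\<^sub>H(X)\<close> grows only quadratically, a Gronwall argument gives
  \<open>\<Psi> \<equiv> X\<close> before that point, contradicting \<open>\<Psi>(0) = 0\<close>. Finally \<open>H \<mapsto> min f\<^sub>H\<close> is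
  negative at \<open>c\<close> and stays positive once it is non-negative, so it vanishes exactly once
  above \<open>c\<close>, at \<open>h(A,q)\<close>; hence \<open>min f\<^sub>H < 0\<close> means \<open>H < h(A,q)\<close>.
\<close>

abbreviation fH_argmin :: "real \<Rightarrow> real \<Rightarrow> real" where
  "fH_argmin q H \<equiv> (2*H) powr (1 / alpha_exp q)"

definition fH_min_value :: "real \<Rightarrow> real \<Rightarrow> real \<Rightarrow> real" where
  "fH_min_value A q H = fH A q H (fH_argmin q H)"

lemma alpha_exp_gt_one: "1 < q \<Longrightarrow> 1 < alpha_exp q"
  by (simp add: alpha_exp_def)

lemma cAq_pos: "1 < q \<Longrightarrow> 0 < A \<Longrightarrow> 0 < cAq A q"
  by (simp add: cAq_def)

lemma fH_argmin_powr: "1 < q \<Longrightarrow> 0 < H \<Longrightarrow> fH_argmin q H powr alpha_exp q = 2*H"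
  using alpha_exp_gt_one[of q] by (simp add: powr_powr)

lemma fH_nonneg_eq:
  assumes "0 \<le> x"
  shows "fH A q H x = 2 / (alpha_exp q + 1) * x powr (alpha_exp q + 1) - 4*H*x + (H - cAq A q)^2"
  using assms by (cases "x = 0") (simp_all add: fH_def powr_add)

lemma continuous_on_fH: "1 < q \<Longrightarrow> continuous_on S (fH A q H)"
  unfolding fH_def using alpha_exp_gt_one[of q]
  by (intro continuous_intros continuous_on_powr') auto

lemma has_real_derivative_fH:
  assumes "1 < q" "0 < y"
  shows "(fH A q H has_real_derivative 2 * y powr alpha_exp q - 4*H) (at y)"
proof -
  let ?a = "alpha_exp q"
  let ?g = "\<lambda>x. 2 / (?a + 1) * x powr (?a + 1) - 4*H*x + (H - cAq A q)^2"
  have "eventually (\<lambda>x. x \<in> {0<..}) (nhds y)"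
    using assms(2) by (intro eventually_nhds_in_open) auto
  then have "eventually (\<lambda>x. fH A q H x = ?g x) (nhds y)"
    by eventually_elim (simp add: fH_nonneg_eq)
  then have "(fH A q H has_real_derivative 2 * y powr ?a - 4*H) (at y)
      \<longleftrightarrow> (?g has_real_derivative 2 * y powr ?a - 4*H) (at y)"
    by (rule DERIV_cong_ev[OF refl _ refl])
  moreover have "(?g has_real_derivative 2 * y powr ?a - 4*H) (at y)"
    using assms alpha_exp_gt_one[of q] by (auto intro!: derivative_eq_intros)
  ultimately show ?thesis by simp
qed

lemma fH_mvt:
  assumes "1 < q" "0 \<le> u" "u < v"
  shows "\<exists>z\<in>{u<..<v}. fH A q H v - fH A q H u = (v - u) * (2 * z powr alpha_exp q - 4*H)"
proof -
  have "fH A q H differentiable (at x)" if "u < x" for x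
    using has_real_derivative_fH[OF assms(1)] that assms(2)
    unfolding real_differentiable_def by (meson order.strict_trans1)
  then obtain l z where z: "u < z" "z < v" "DERIV (fH A q H) z :> l"
      "fH A q H v - fH A q H u = (v - u) * l"
    using MVT[OF assms(3) continuous_on_fH[OF assms(1)]] by blast
  moreover have "l = 2 * z powr alpha_exp q - 4*H"
    using z(1) assms(2) by (intro DERIV_unique[OF z(3) has_real_derivative_fH[OF assms(1)]]) simp
  ultimately show ?thesis by auto
qed

lemma fH_diff_argminE:
  assumes "1 < q" "0 < H" "0 \<le> y" "y \<noteq> fH_argmin q H"
  obtains z where "0 < z" "\<bar>z - fH_argmin q H\<bar> < \<bar>y - fH_argmin q H\<bar>"
    "0 < (z - fH_argmin q H) * (y - fH_argmin q H)"
    "fH A q H y - fH A q H (fH_argmin q H)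
       = (y - fH_argmin q H) * (2 * (z powr alpha_exp q - fH_argmin q H powr alpha_exp q))"
proof -
  let ?X = "fH_argmin q H"
  have X: "0 < ?X" "?X powr alpha_exp q = 2*H"
    using assms fH_argmin_powr by auto
  consider "y < ?X" | "?X < y" using assms(4) by linarith
  then show ?thesis
  proof cases
    case 1
    then obtain z where z: "z \<in> {y<..<?X}"
      "fH A q H ?X - fH A q H y = (?X - y) * (2 * z powr alpha_exp q - 4*H)"
      using fH_mvt assms by blast
    have "0 < z" "\<bar>z - ?X\<bar> < \<bar>y - ?X\<bar>" "0 < (z - ?X) * (y - ?X)"
      using z(1) 1 assms(3) by (simp_all add: mult_neg_neg)
    moreover have "fH A q H y - fH A q H ?X = (y - ?X) * (2 * (z powr alpha_exp q - ?X powr alpha_exp q))"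
      using z(2) X(2) by (simp add: algebra_simps)
    ultimately show ?thesis by (rule that)
  next
    case 2
    then obtain z where z: "z \<in> {?X<..<y}"
      "fH A q H y - fH A q H ?X = (y - ?X) * (2 * z powr alpha_exp q - 4*H)"
      using fH_mvt[OF assms(1) less_imp_le[OF X(1)] 2] by blast
    have "0 < z" "\<bar>z - ?X\<bar> < \<bar>y - ?X\<bar>" "0 < (z - ?X) * (y - ?X)"
      using z(1) 2 X(1) by (simp_all del: powr_gt_zero)
    moreover have "fH A q H y - fH A q H ?X = (y - ?X) * (2 * (z powr alpha_exp q - ?X powr alpha_exp q))"
      using z(2) X(2) by (simp add: algebra_simps)
    ultimately show ?thesis by (rule that)
  qed
qed

lemma fH_argmin_strict_min:
  assumes "1 < q" "0 < H" "0 \<le> y" "y \<noteq> fH_argmin q H"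
  shows "fH A q H (fH_argmin q H) < fH A q H y"
proof -
  let ?X = "fH_argmin q H"
  obtain z where z: "0 < z" "0 < (z - ?X) * (y - ?X)"
    "fH A q H y - fH A q H ?X = (y - ?X) * (2 * (z powr alpha_exp q - ?X powr alpha_exp q))"
    using fH_diff_argminE[OF assms] by metis
  have "0 < (z powr alpha_exp q - ?X powr alpha_exp q) * (y - ?X)"
  proof (cases "?X < z")
    case True
    then show ?thesis
      using z(2) alpha_exp_gt_one[OF assms(1)] powr_less_mono2[of "alpha_exp q" ?X z]
      by (auto simp: zero_less_mult_iff)
  next
    case False
    then show ?thesis
      using z alpha_exp_gt_one[OF assms(1)] powr_less_mono2[of "alpha_exp q" z ?X]
      by (auto simp: zero_less_mult_iff)
  qed
  then show ?thesis using z(3) by (simp add: algebra_simps)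
qed

lemma abs_powr_diff_le:
  fixes a u v B :: real
  assumes "1 \<le> a" "0 < u" "0 < v" "u \<le> B" "v \<le> B"
  shows "\<bar>v powr a - u powr a\<bar> \<le> a * B powr (a - 1) * \<bar>v - u\<bar>"
proof -
  have mono_case: "\<bar>t powr a - s powr a\<bar> \<le> a * B powr (a - 1) * \<bar>t - s\<bar>"
    if st: "0 < s" "s < t" "t \<le> B" for s t
  proof -
    have d: "\<And>x. s \<le> x \<Longrightarrow> x \<le> t \<Longrightarrow> ((\<lambda>r. r powr a) has_real_derivative a * x powr (a - 1)) (at x)"
      using st(1) by (intro has_real_derivative_powr) auto
    obtain z where z: "s < z" "z < t" "t powr a - s powr a = (t - s) * (a * z powr (a - 1))"
      using MVT2[OF st(2), of "\<lambda>r. r powr a" "\<lambda>x. a * x powr (a - 1)", OF d] by blast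
    have "z powr (a - 1) \<le> B powr (a - 1)"
      using z st assms(1) by (intro powr_mono2) auto
    then have "(t - s) * (a * z powr (a - 1)) \<le> (t - s) * (a * B powr (a - 1))"
      using st assms(1) by (intro mult_left_mono) auto
    moreover have "s powr a \<le> t powr a"
      using st assms(1) by (intro powr_mono2) auto
    ultimately show ?thesis
      using z(3) st by (simp add: algebra_simps)
  qed
  show ?thesis
    using mono_case[of u v] mono_case[of v u] assms
    by (cases u v rule: linorder_cases) (auto simp: abs_minus_commute)
qed

lemma fH_sub_argmin_le_sq:
  assumes "1 < q" "0 < H" "0 \<le> y" "y \<le> B" "fH_argmin q H \<le> B"
  shows "fH A q H y - fH A q H (fH_argmin q H)
           \<le> 2 * alpha_exp q * B powr (alpha_exp q - 1) * (y - fH_argmin q H)^2"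
proof (cases "y = fH_argmin q H")
  case False
  let ?X = "fH_argmin q H" and ?a = "alpha_exp q"
  let ?L = "?a * B powr (?a - 1)"
  obtain z where z: "0 < z" "\<bar>z - ?X\<bar> < \<bar>y - ?X\<bar>" "0 < (z - ?X) * (y - ?X)"
    "fH A q H y - fH A q H ?X = (y - ?X) * (2 * (z powr ?a - ?X powr ?a))"
    using fH_diff_argminE[OF assms(1-3) False] by metis
  have "z \<le> B"
    using z(2,3) assms(4,5) by (auto simp: abs_if zero_less_mult_iff split: if_splits)
  then have "\<bar>z powr ?a - ?X powr ?a\<bar> \<le> ?L * \<bar>z - ?X\<bar>"
    using z(1) assms alpha_exp_gt_one[OF assms(1)] by (intro abs_powr_diff_le) auto
  also have "\<dots> \<le> ?L * \<bar>y - ?X\<bar>"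
    using z(2) alpha_exp_gt_one[OF assms(1)] by (intro mult_left_mono) auto
  finally have "\<bar>y - ?X\<bar> * \<bar>z powr ?a - ?X powr ?a\<bar> \<le> \<bar>y - ?X\<bar> * (?L * \<bar>y - ?X\<bar>)"
    by (intro mult_left_mono) auto
  then show ?thesis
    using z(4) by (simp add: abs_mult[symmetric] power2_eq_square algebra_simps)
qed simp

lemma fH_min_value_eq:
  assumes "1 < q" "0 < H"
  shows "fH_min_value A q H
           = (H - cAq A q)^2 - 4 * alpha_exp q / (alpha_exp q + 1) * H * (2*H) powr (1 / alpha_exp q)"
proof -
  let ?a = "alpha_exp q" and ?X = "fH_argmin q H"
  have "\<bar>?X\<bar> powr ?a = 2*H"
    using fH_argmin_powr[OF assms] by simp
  then have "fH_min_value A q H = 2 / (?a + 1) * ?X * (2*H) - 4*H*?X + (H - cAq A q)^2"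
    by (simp add: fH_min_value_def fH_def)
  also have "\<dots> = (H - cAq A q)^2 - 4 * ?a / (?a + 1) * H * ?X"
    using alpha_exp_gt_one[OF assms(1)] by (simp add: field_simps)
  finally show ?thesis .
qed

lemma sq_sub_ge_powr_growth_propagates:
  fixes c b k H1 H2 :: real
  assumes "0 < c" "0 < b" "b < 1" "0 < k" "c < H1" "H1 < H2"
    and "k * H1 * (2*H1) powr b \<le> (H1 - c)^2"
  shows "k * H2 * (2*H2) powr b < (H2 - c)^2"
proof -
  define t where "t = H2 / H1"
  have H1: "0 < H1" using assms by simp
  have t: "1 < t" "H2 = t * H1" using assms H1 by (simp_all add: t_def)
  define s where "s = t powr ((1 + b) / 2)"
  have s: "1 < s" "s < t" "s^2 = t powr (1 + b)"
    using t(1) assms(2,3) powr_less_mono[of 0 "(1 + b) / 2" t] powr_less_mono[of "(1 + b) / 2" 1 t]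
    by (auto simp: s_def power2_eq_square powr_add[symmetric])
  have "k * H2 * (2*H2) powr b = t powr (1 + b) * (k * H1 * (2*H1) powr b)"
    using t H1 by (simp add: powr_mult powr_add)
  also have "\<dots> \<le> (s * (H1 - c))^2"
    using assms(7) s(3) t(1) by (simp add: power_mult_distrib mult_left_mono)
  also have "\<dots> < (H2 - c)^2"
  proof (rule power_strict_mono)
    have "H2 - c - s * (H1 - c) = H1 * (t - s) + c * (s - 1)"
      by (simp add: t(2) algebra_simps)
    also have "\<dots> > 0"
      using H1 s assms(1) by (intro add_pos_pos mult_pos_pos) auto
    finally show "s * (H1 - c) < H2 - c" by simp
  qed (use s assms in auto)
  finally show ?thesis .
qed

lemma sq_sub_ge_powr_growth_eventually:
  fixes c b k :: real
  assumes "0 < c" "0 < b" "b < 1" "0 < k"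
  obtains B where "c < B" "k * B * (2*B) powr b \<le> (B - c)^2"
proof -
  define K where "K = 4 * k * 2 powr b"
  define B where "B = max (2*c) (K powr (1 / (1 - b))) + 1"
  have K: "0 < K" and B: "0 < B" "2*c < B"
    using assms by (auto simp: K_def B_def)
  have "K powr (1 / (1 - b)) \<le> B" by (simp add: B_def)
  then have "(K powr (1 / (1 - b))) powr (1 - b) \<le> B powr (1 - b)"
    using assms by (intro powr_mono2) auto
  then have KB: "K \<le> B powr (1 - b)"
    using assms K by (simp add: powr_powr)
  have "k * B * (2*B) powr b = K / 4 * B powr (1 + b)"
    using B by (simp add: K_def powr_mult powr_add)
  also have "\<dots> \<le> B powr (1 - b) / 4 * B powr (1 + b)"
    using KB by (intro mult_right_mono) auto
  also have "\<dots> = (B / 2)^2"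
    using B by (simp add: powr_add[symmetric] power2_eq_square)
  also have "\<dots> \<le> (B - c)^2"
    using B assms(1) by (intro power_mono) auto
  finally show ?thesis
    using B assms(1) by (intro that) auto
qed

lemma fH_min_value_propagates:
  assumes "1 < q" "0 < A" "cAq A q < H1" "H1 < H2" "0 \<le> fH_min_value A q H1"
  shows "0 < fH_min_value A q H2"
proof -
  have "0 < cAq A q" "1 < alpha_exp q"
    using assms cAq_pos alpha_exp_gt_one by auto
  then show ?thesis
    using sq_sub_ge_powr_growth_propagates[of "cAq A q" "1 / alpha_exp q" "4 * alpha_exp q / (alpha_exp q + 1)" H1 H2]
      assms fH_min_value_eq[OF assms(1), of H1 A] fH_min_value_eq[OF assms(1), of H2 A]
    by simp
qed

lemma hAq_root:
  assumes "1 < q" "0 < A"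
  shows "cAq A q < hAq A q" "fH_min_value A q (hAq A q) = 0"
proof -
  let ?c = "cAq A q" and ?a = "alpha_exp q"
  define Phi where "Phi h = (h - ?c)^2 - 4 * ?a / (?a + 1) * h * (2*h) powr (1 / ?a)" for h
  have c: "0 < ?c" and a: "1 < ?a"
    using assms cAq_pos alpha_exp_gt_one by auto
  have Phi: "fH_min_value A q h = Phi h" if "0 < h" for h
    using fH_min_value_eq[OF assms(1) that] by (simp add: Phi_def)
  obtain B where B: "?c < B" "0 \<le> Phi B"
    using sq_sub_ge_powr_growth_eventually[of ?c "1 / ?a" "4 * ?a / (?a + 1)"] c a
    by (auto simp: Phi_def)
  have "continuous_on {?c..B} Phi"
    unfolding Phi_def using c by (intro continuous_intros) auto
  moreover have "Phi ?c < 0"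
    using c a by (simp add: Phi_def)
  ultimately obtain h0 where h0: "?c \<le> h0" "h0 \<le> B" "Phi h0 = 0"
    using IVT'[of Phi ?c 0 B] B by auto
  with \<open>Phi ?c < 0\<close> have h0c: "?c < h0"
    by (cases "h0 = ?c") auto
  have "\<exists>!h. ?c < h \<and> fH_min_value A q h = 0"
  proof (rule ex1I)
    show "?c < h0 \<and> fH_min_value A q h0 = 0"
      using h0 h0c c Phi by simp
    show "h = h0" if "?c < h \<and> fH_min_value A q h = 0" for h
      using that h0c fH_min_value_propagates[OF assms, of h h0] fH_min_value_propagates[OF assms, of h0 h]
        \<open>?c < h0 \<and> fH_min_value A q h0 = 0\<close>
      by (cases h h0 rule: linorder_cases) auto
  qed
  then have "?c < hAq A q \<and> fH_min_value A q (hAq A q) = 0"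
    unfolding hAq_def fH_min_value_def[symmetric] by (rule theI')
  then show "?c < hAq A q" "fH_min_value A q (hAq A q) = 0"
    by auto
qed

lemma less_hAq:
  assumes "1 < q" "0 < A" "cAq A q < H" "fH_min_value A q H < 0"
  shows "H < hAq A q"
  using hAq_root[OF assms(1,2)] fH_min_value_propagates[OF assms(1,2), of "hAq A q" H] assms(4)
  by (cases H "hAq A q" rule: linorder_cases) auto

lemma eq_at_left_of_deriv_le_dist:
  fixes u u' :: "real \<Rightarrow> real"
  assumes "a \<le> b" "continuous_on {a..b} u"
    and "\<And>t. a < t \<Longrightarrow> t < b \<Longrightarrow> (u has_real_derivative u' t) (at t)"
    and "\<And>t. a < t \<Longrightarrow> t < b \<Longrightarrow> \<bar>u' t\<bar> \<le> L * \<bar>u t - y\<bar>"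
    and "u b = y"
  shows "u a = y"
proof -
  define z where "z t = (u t - y)^2 * exp (2 * L * t)" for t
  have "z a \<le> z b"
  proof (rule DERIV_nonneg_imp_increasing_open[OF assms(1)])
    show "continuous_on {a..b} z"
      unfolding z_def using assms(2) by (intro continuous_intros)
    fix t assume t: "a < t" "t < b"
    have "- (u' t * (u t - y)) \<le> \<bar>u' t\<bar> * \<bar>u t - y\<bar>"
      by (simp add: abs_mult[symmetric])
    also have "\<dots> \<le> L * \<bar>u t - y\<bar> * \<bar>u t - y\<bar>"
      using assms(4)[OF t] by (intro mult_right_mono) auto
    finally have "0 \<le> 2 * (u' t * (u t - y)) + 2 * L * (u t - y)^2"
      by (simp add: power2_eq_square abs_mult_self_eq)
    then have "0 \<le> (2 * (u' t * (u t - y)) + 2 * L * (u t - y)^2) * exp (2 * L * t)"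
      by simp
    moreover have "(z has_real_derivative (2 * (u' t * (u t - y)) + 2 * L * (u t - y)^2) * exp (2 * L * t)) (at t)"
      unfolding z_def using assms(3)[OF t]
      by (auto intro!: derivative_eq_intros simp: algebra_simps)
    ultimately show "\<exists>d. (z has_real_derivative d) (at t) \<and> 0 \<le> d"
      by blast
  qed
  then have "(u a - y)^2 \<le> 0"
    using assms(5) by (simp add: z_def mult_le_0_iff)
  then show ?thesis
    by simp
qed

locale Psi_bvp =
  fixes q A H :: real and \<Psi> \<Psi>' \<Psi>'' :: "real \<Rightarrow> real"
  assumes q_gt_1: "1 < q" and A_pos: "0 < A"
    and Psi_pos: "\<And>x. x \<in> {0<..<1} \<Longrightarrow> 0 < \<Psi> x"
    and Psi_deriv: "\<And>x. x \<in> {0..1} \<Longrightarrow> (\<Psi> has_real_derivative \<Psi>' x) (at x within {0..1})"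
    and Psi'_deriv: "\<And>x. x \<in> {0..1} \<Longrightarrow> (\<Psi>' has_real_derivative \<Psi>'' x) (at x within {0..1})"
    and Psi_ode: "\<And>x. x \<in> {0..1} \<Longrightarrow> \<Psi>'' x - \<bar>\<Psi> x\<bar> powr alpha_exp q + 2 * H = 0"
    and Psi_0: "\<Psi> 0 = 0" and Psi_1: "\<Psi> 1 = 0"
    and Psi'_0: "\<Psi>' 0 = H - cAq A q"
begin

lemma Psi_nonneg: "x \<in> {0..1} \<Longrightarrow> 0 \<le> \<Psi> x"
  using Psi_pos[of x] Psi_0 Psi_1 by (cases "x = 0 \<or> x = 1") auto

lemma continuous_on_Psi: "continuous_on {0..1} \<Psi>"
  using Psi_deriv DERIV_continuous continuous_on_eq_continuous_within by blast

lemma continuous_on_Psi': "continuous_on {0..1} \<Psi>'"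
  using Psi'_deriv DERIV_continuous continuous_on_eq_continuous_within by blast

lemma Psi_deriv_at: "0 < x \<Longrightarrow> x < 1 \<Longrightarrow> (\<Psi> has_real_derivative \<Psi>' x) (at x)"
  using Psi_deriv[of x] at_within_interior[of x "{0..1}"] by simp

lemma Psi'_deriv_at: "0 < x \<Longrightarrow> x < 1 \<Longrightarrow> (\<Psi>' has_real_derivative \<Psi>'' x) (at x)"
  using Psi'_deriv[of x] at_within_interior[of x "{0..1}"] by simp

lemma cAq_le_H: "cAq A q \<le> H"
proof (rule ccontr)
  assume "\<not> cAq A q \<le> H"
  then obtain d where d: "0 < d" "\<forall>h>0. h \<in> {0..1} \<longrightarrow> h < d \<longrightarrow> \<Psi> h < \<Psi> 0"
    using has_real_derivative_neg_dec_right[OF Psi_deriv[of 0]] Psi'_0 by auto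
  define h where "h = min (d/2) (1/2)"
  have "0 < h" "h < d" "h < 1"
    using d(1) by (auto simp: h_def)
  then show False
    using d(2) Psi_0 Psi_pos[of h] by auto
qed

lemma H_pos: "0 < H"
  using cAq_le_H cAq_pos[OF q_gt_1 A_pos] by simp

lemma energy_identity: "x \<in> {0..1} \<Longrightarrow> (\<Psi>' x)^2 = fH A q H (\<Psi> x)"
proof -
  define E where "E t = (\<Psi>' t)^2 - fH A q H (\<Psi> t)" for t
  have "continuous_on {0..1} E"
    unfolding E_def
    using continuous_on_compose2[OF continuous_on_fH[OF q_gt_1] continuous_on_Psi subset_UNIV]
      continuous_on_Psi'
    by (intro continuous_intros)
  moreover have "(E has_real_derivative 0) (at t)" if t: "0 < t" "t < 1" for t
  proof -
    have pos: "0 < \<Psi> t"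
      using t Psi_pos by simp
    then have "\<Psi> t powr alpha_exp q = \<Psi>'' t + 2*H"
      using t Psi_ode[of t] by simp
    then have zero: "2 * \<Psi>'' t * \<Psi>' t - (2 * \<Psi> t powr alpha_exp q - 4*H) * \<Psi>' t = 0"
      by (simp add: algebra_simps)
    have "(E has_real_derivative
        2 * \<Psi>'' t * \<Psi>' t - (2 * \<Psi> t powr alpha_exp q - 4*H) * \<Psi>' t) (at t)"
      unfolding E_def using pos
      by (auto intro!: derivative_eq_intros Psi_deriv_at Psi'_deriv_at
          DERIV_chain2[OF has_real_derivative_fH[OF q_gt_1]] t)
    then show ?thesis
      unfolding zero .
  qed
  ultimately have "E x = E 0" if "x \<in> {0..1}" "0 < x" for x
    using that DERIV_isconst_end[of 0 x E] continuous_on_subset by force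
  moreover have "E 0 = 0"
    by (simp add: E_def fH_def Psi_0 Psi'_0)
  ultimately show "x \<in> {0..1} \<Longrightarrow> (\<Psi>' x)^2 = fH A q H (\<Psi> x)"
    by (cases "x = 0") (auto simp: E_def)
qed

lemma cAq_less_H: "cAq A q < H"
proof (rule ccontr)
  assume "\<not> cAq A q < H"
  then have H: "H = cAq A q"
    using cAq_le_H by simp
  let ?a = "alpha_exp q" and ?X = "fH_argmin q H"
  have X: "0 < ?X" "?X powr ?a = 2*H"
    using fH_argmin_powr[OF q_gt_1 H_pos] H_pos by auto
  obtain d where d: "0 < d" "\<forall>t\<in>{0..1}. dist t 0 < d \<longrightarrow> dist (\<Psi> t) (\<Psi> 0) < ?X"
    using continuous_on_Psi X(1) unfolding continuous_on_iff by (metis atLeastAtMost_iff order_refl zero_le_one)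
  define t :: real where "t = min (d/2) (1/2)"
  have t: "0 < t" "t < 1" "t < d"
    using d(1) by (auto simp: t_def)
  then have pos: "0 < \<Psi> t" and "\<Psi> t < ?X"
    using Psi_pos d(2) Psi_0 by auto
  then have "\<Psi> t powr ?a < 2*H"
    using X(2) powr_less_mono2[of ?a "\<Psi> t" ?X] alpha_exp_gt_one[OF q_gt_1] by simp
  moreover have "2 / (?a + 1) \<le> 1"
    using alpha_exp_gt_one[OF q_gt_1] by simp
  ultimately have "2 / (?a + 1) * \<Psi> t powr ?a - 4*H < 0"
    using H_pos mult_right_mono[of "2 / (?a + 1)" 1 "\<Psi> t powr ?a"] by simp
  moreover have "fH A q H (\<Psi> t) = \<Psi> t * (2 / (?a + 1) * \<Psi> t powr ?a - 4*H)"
    using pos by (simp add: fH_nonneg_eq H powr_add algebra_simps)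
  ultimately have "fH A q H (\<Psi> t) < 0"
    using pos by (simp add: mult_pos_neg)
  moreover have "(\<Psi>' t)^2 = fH A q H (\<Psi> t)"
    using energy_identity t by simp
  then have "0 \<le> fH A q H (\<Psi> t)"
    by (metis zero_le_power2)
  ultimately show False
    by simp
qed

lemma interior_critical_pointE:
  obtains m where "0 < m" "m < 1" "\<Psi>' m = 0"
proof -
  have "\<Psi> differentiable (at x)" if "0 < x" "x < 1" for x
    using Psi_deriv_at[OF that] real_differentiable_def by blast
  then obtain m where "0 < m" "m < 1" "DERIV \<Psi> m :> 0"
    using Rolle[OF zero_less_one _ continuous_on_Psi] Psi_0 Psi_1 by auto
  then show ?thesis
    using that DERIV_unique Psi_deriv_at by blast
qed

lemma fH_min_value_neg: "fH_min_value A q H < 0"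
proof (rule ccontr)
  assume nonneg: "\<not> fH_min_value A q H < 0"
  let ?a = "alpha_exp q" and ?X = "fH_argmin q H"
  have X: "0 < ?X"
    using H_pos by simp
  obtain m where m: "0 < m" "m < 1" "\<Psi>' m = 0"
    by (rule interior_critical_pointE)
  then have fm: "fH A q H (\<Psi> m) = 0"
    using energy_identity[of m] by simp
  have mX: "\<Psi> m = ?X"
  proof (rule ccontr)
    assume "\<Psi> m \<noteq> ?X"
    then have "fH_min_value A q H < fH A q H (\<Psi> m)"
      unfolding fH_min_value_def using m Psi_nonneg
      by (intro fH_argmin_strict_min[OF q_gt_1 H_pos]) auto
    then show False
      using fm nonneg by simp
  qed
  obtain x0 where x0: "\<forall>y\<in>{0..1}. \<Psi> y \<le> \<Psi> x0"
    using continuous_attains_sup[OF compact_Icc _ continuous_on_Psi] by auto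
  define B where "B = max ?X (\<Psi> x0)"
  define C where "C = 2 * ?a * B powr (?a - 1)"
  have "\<bar>\<Psi>' t\<bar> \<le> sqrt C * \<bar>\<Psi> t - ?X\<bar>" if t: "t \<in> {0..1}" for t
  proof -
    have "(\<Psi>' t)^2 = fH A q H (\<Psi> t) - fH A q H ?X"
      using energy_identity[OF t] fm mX by simp
    also have "\<dots> \<le> C * (\<Psi> t - ?X)^2"
      unfolding C_def using bspec[OF x0 t] Psi_nonneg[OF t]
      by (intro fH_sub_argmin_le_sq[OF q_gt_1 H_pos]) (auto simp: B_def)
    finally have "sqrt ((\<Psi>' t)^2) \<le> sqrt (C * (\<Psi> t - ?X)^2)"
      by (rule real_sqrt_le_mono)
    then show ?thesis
      by (simp add: real_sqrt_mult)
  qed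
  then have "\<Psi> 0 = ?X"
    using m continuous_on_subset[OF continuous_on_Psi, of "{0..m}"] Psi_deriv_at mX
    by (intro eq_at_left_of_deriv_le_dist[of 0 m \<Psi> \<Psi>' "sqrt C"]) auto
  then show False
    using X Psi_0 by simp
qed

end

theorem mainTheorem17:
  fixes A q H :: real and V \<Psi> \<Psi>' \<Psi>'' :: "real \<Rightarrow> real"
  assumes "q > 1" and "A > 0"
    and "admissible A q V"
    and "\<forall>W. admissible A q W \<longrightarrow> yV1 W \<le> yV1 V"
    and "\<forall>x\<in>{0<..<1}. \<Psi> x > 0"
    and "\<forall>x\<in>{0..1}. (\<Psi> has_real_derivative \<Psi>' x) (at x within {0..1})"
    and "\<forall>x\<in>{0..1}. (\<Psi>' has_real_derivative \<Psi>'' x) (at x within {0..1})"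
    and "\<forall>x\<in>{0..1}. \<Psi>'' x - \<bar>\<Psi> x\<bar> powr (alpha_exp q) + 2 * H = 0"
    and "\<Psi> 0 = 0" and "\<Psi> 1 = 0"
    and "\<Psi>' 0 = H - cAq A q"
    and "\<forall>x\<in>{0..1}. V x = q / (4*q - 2) * \<Psi> x powr (1 / (q - 1))"
  shows "cAq A q < H \<and> H < hAq A q"
proof -
  interpret Psi_bvp q A H \<Psi> \<Psi>' \<Psi>''
    using assms(1,2,5-11) by unfold_locales auto
  show ?thesis
    using cAq_less_H less_hAq[OF q_gt_1 A_pos cAq_less_H fH_min_value_neg] by simp
qed

end
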